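(* Let $M\in S_d^+$ and let $\mathcal T$ be an $M$-reduced mesh. Let $z\in\mathbb Z^d$. Then there exists $T\in\mathcal T$ with $-z\in\mathbb R_+T:=\{rx;\ r\ge0,\ x\in T\}$; and for any $T\in\mathcal T$ with $-z\in\mathbb R_+T$, denoting by $v_1,\dots,v_d$ the non-zero vertices of $T$, there exist non-negative integers $\beta_1,\dots,\beta_d$ such that $z+\beta_1v_1+\dots+\beta_dv_d=0$.
   Context: $S_d^+$ is the set of $d\times d$ symmetric positive definite matrices; $\langle u,v\rangle_M:=u^TMv$. An $M$-reduced mesh is a finite conforming mesh $\mathcal T$ of simplices in $\mathbb R^d$ such that: (I) the union of its simplices is a neighborhood of the origin; (II) the vertices of each $T\in\mathcal T$ lie in $\mathbb Z^d$ and $T$ has volume $1/d!$; (III) each $T\in\mathcal T$ has the origin as a vertex, and its other vertices $v_1,\dots,v_d$ satisfy $\langle v_i,v_j\rangle_M\ge0$ for all $i,j$. *)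

theory Defs
  imports "HOL-Analysis.Analysis"
begin

definition sym_pos_def :: "real^'n^'n \<Rightarrow> bool" where
  "sym_pos_def M \<longleftrightarrow> transpose M = M \<and> (\<forall>x. x \<noteq> 0 \<longrightarrow> x \<bullet> (M *v x) > 0)"

definition mdot :: "real^'n^'n \<Rightarrow> real^'n \<Rightarrow> real^'n \<Rightarrow> real" where
  "mdot M u v = u \<bullet> (M *v v)"

definition integer_vec :: "real^'n \<Rightarrow> bool" where
  "integer_vec v \<longleftrightarrow> (\<forall>i. v $ i \<in> \<int>)"

text \<open>A simplex is represented by its vertex set: d+1 affinely independent points;
  the simplex itself is the convex hull.\<close>
definition is_simplex_verts :: "(real^'n) set \<Rightarrow> bool" where
  "is_simplex_verts V \<longleftrightarrow> finite V \<and> card V = CARD('n) + 1 \<and> \<not> affine_dependent V"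

definition conforming_mesh :: "(real^'n) set set \<Rightarrow> bool" where
  "conforming_mesh \<T> \<longleftrightarrow> finite \<T> \<and> (\<forall>V\<in>\<T>. is_simplex_verts V) \<and>
     (\<forall>V\<in>\<T>. \<forall>W\<in>\<T>. convex hull V \<inter> convex hull W = convex hull (V \<inter> W))"

definition M_reduced_mesh :: "real^'n^'n \<Rightarrow> (real^'n) set set \<Rightarrow> bool" where
  "M_reduced_mesh M \<T> \<longleftrightarrow> conforming_mesh \<T> \<and>
     (0::real^'n) \<in> interior (\<Union>V\<in>\<T>. convex hull V) \<and>
     (\<forall>V\<in>\<T>. (\<forall>v\<in>V. integer_vec v) \<and>
        measure lebesgue (convex hull V) = 1 / fact CARD('n)) \<and>
     (\<forall>V\<in>\<T>. 0 \<in> V \<and> (\<forall>u\<in>V - {0}. \<forall>w\<in>V - {0}. mdot M u w \<ge> 0))"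

definition pos_cone :: "(real^'n) set \<Rightarrow> (real^'n) set" where
  "pos_cone T = {r *\<^sub>R x | r x. r \<ge> 0 \<and> x \<in> T}"

end

theory Submission
  imports Defs
begin

text \<open>
  A simplex with vertices \<open>0, v\<^sub>1, \<dots>, v\<^sub>d \<in> \<int>\<^sup>d\<close> has volume \<open>\<bar>det (v\<^sub>1 \<dots> v\<^sub>d)\<bar> / d!\<close>, so
  volume \<open>1/d!\<close> makes its vertex matrix unimodular. As the origin is interior to the mesh, a
  small positive multiple of \<open>-z\<close> lies in some simplex, hence \<open>-z\<close> lies in its cone. Writing
  \<open>-z = \<Sum> c\<^sub>i v\<^sub>i\<close> with \<open>c\<^sub>i \<ge> 0\<close>, Cramer's rule with determinant \<open>\<plusminus>1\<close> makes the \<open>c\<^sub>i\<close> integers.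
\<close>

text \<open>
  The library's simplex volume formula \<open>content_simplex\<close> requires a well-ordered index type;
  it is transferred to an arbitrary finite index type through a well-ordered copy of it.
\<close>

typedef 'a wellordered = "UNIV :: 'a set" by simp

instance wellordered :: (finite) finite
  by standard (metis type_definition.univ[OF type_definition_wellordered] finite_imageI finite)

instantiation wellordered :: (finite) linorder
begin
definition "x \<le> y \<longleftrightarrow> to_nat (Rep_wellordered x) \<le> to_nat (Rep_wellordered y)"
definition "x < y \<longleftrightarrow> to_nat (Rep_wellordered x) < to_nat (Rep_wellordered y)"
instance
  by standard (auto simp: less_eq_wellordered_def less_wellordered_def Rep_wellordered_inject)
end

instance wellordered :: (finite) wellorder
proof (rule wf_wellorderI)
  show "wf {(x, y :: 'a wellordered). x < y}"
    using wf_inv_image[OF wf_less, of "to_nat \<circ> Rep_wellordered :: 'a wellordered \<Rightarrow> nat"]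
    by (simp add: inv_image_def less_wellordered_def)
qed intro_classes

lemma bij_Rep_wellordered: "bij Rep_wellordered"
  by (metis Rep_wellordered_inverse Abs_wellordered_inverse UNIV_I bij_betw_byWitness subset_UNIV)

lemma card_wellordered: "CARD('a wellordered) = CARD('a)"
  using bij_betw_same_card[OF bij_Rep_wellordered] by simp

definition vec_reindex :: "('m \<Rightarrow> 'n) \<Rightarrow> 'a^'n \<Rightarrow> 'a^'m" where
  "vec_reindex p x = (\<chi> i. x $ p i)"

lemma vec_reindex_nth [simp]: "vec_reindex p x $ i = x $ p i"
  by (simp add: vec_reindex_def)

lemma vec_reindex_vec_reindex [simp]: "vec_reindex p (vec_reindex q x) = vec_reindex (q \<circ> p) x"
  by (simp add: vec_eq_iff)

lemma vec_reindex_id [simp]: "vec_reindex id x = x"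
  by (simp add: vec_eq_iff)

lemma linear_vec_reindex: "linear (vec_reindex p :: real^'n \<Rightarrow> real^'m)"
  by (rule linearI) (simp_all add: vec_eq_iff)

lemma inj_vec_reindex: "surj p \<Longrightarrow> inj (vec_reindex p)"
  by (rule injI) (metis vec_eq_iff vec_reindex_nth surjD)

lemma prod_Basis_cart: "(\<Prod>b\<in>Basis. x \<bullet> b) = (\<Prod>i\<in>UNIV. x $ i)" for x :: "real^'n"
  by (simp add: Basis_vec_def cart_eq_inner_axis axis_eq_axis prod.UNION_disjoint)

lemma emeasure_lborel_box_cart:
  fixes l u :: "real^'n"
  assumes "\<And>i. l $ i \<le> u $ i"
  shows "emeasure lborel (box l u) = (\<Prod>i\<in>UNIV. ennreal (u $ i - l $ i))"
proof -
  have "\<forall>b\<in>Basis. l \<bullet> b \<le> u \<bullet> b"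
    using assms by (auto simp: Basis_vec_def inner_axis)
  then show ?thesis
    using assms by (simp add: prod_Basis_cart prod_ennreal)
qed

lemma lborel_vec_reindex:
  assumes "bij p"
  shows "lborel = distr lborel borel (vec_reindex p :: real^'n \<Rightarrow> real^'m)"
proof (rule lborel_eqI)
  fix l u :: "real^'m"
  assume le_Basis: "\<And>b. b \<in> Basis \<Longrightarrow> l \<bullet> b \<le> u \<bullet> b"
  have le: "l $ i \<le> u $ i" for i
    using le_Basis[of "axis i 1"] by (auto simp: cart_eq_inner_axis Basis_vec_def)
  let ?q = "inv p"
  have meas: "vec_reindex p \<in> borel_measurable (lborel :: (real^'n) measure)"
    using linear_vec_reindex[of p, unfolded linear_conv_bounded_linear]
    by (simp add: borel_measurable_continuous_onI linear_continuous_on)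
  have "vec_reindex p -` box l u = box (vec_reindex ?q l) (vec_reindex ?q u)"
    using assms by (auto simp: mem_box_cart bij_inv_eq_iff) (metis bij_inv_eq_iff)+
  then have "emeasure (distr lborel borel (vec_reindex p)) (box l u)
      = (\<Prod>j\<in>UNIV. ennreal (u $ ?q j - l $ ?q j))"
    using meas le by (simp add: emeasure_distr emeasure_lborel_box_cart)
  also have "\<dots> = (\<Prod>i\<in>UNIV. ennreal (u $ i - l $ i))"
    using prod.reindex_bij_betw[OF bij_betw_inv_into[OF assms], of "\<lambda>i. ennreal (u $ i - l $ i)"]
    by simp
  finally show "emeasure (distr lborel borel (vec_reindex p)) (box l u) = (\<Prod>b\<in>Basis. (u - l) \<bullet> b)"
    using le by (simp add: prod_Basis_cart prod_ennreal)
qed simp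

lemma measure_vec_reindex_image:
  fixes S :: "(real^'n) set" and p :: "'m::finite \<Rightarrow> 'n"
  assumes "bij p" "S \<in> sets borel"
  shows "measure lborel (vec_reindex p ` S) = measure lborel S"
proof -
  have meas: "vec_reindex (inv p) \<in> borel_measurable (lborel :: (real^'m) measure)"
    using linear_vec_reindex[of "inv p", unfolded linear_conv_bounded_linear]
    by (simp add: borel_measurable_continuous_onI linear_continuous_on)
  have inv_comp: "p \<circ> inv p = id" "inv p \<circ> p = id"
    using assms(1) by (simp_all add: bij_is_surj bij_is_inj surj_iff[symmetric] inj_iff[symmetric])
  have "vec_reindex p ` S = vec_reindex (inv p) -` S"
  proof (rule set_eqI)
    fix x :: "real^'m"
    have left_inv: "vec_reindex (inv p) (vec_reindex p s) = s" for s :: "real^'n"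
      by (simp add: inv_comp)
    have right_inv: "vec_reindex p (vec_reindex (inv p) x) = x"
      by (simp add: inv_comp)
    show "x \<in> vec_reindex p ` S \<longleftrightarrow> x \<in> vec_reindex (inv p) -` S"
      using left_inv right_inv by (auto simp del: vec_reindex_vec_reindex) (metis image_eqI)
  qed
  also have "measure lborel \<dots> = measure (distr lborel borel (vec_reindex (inv p))) S"
    using meas assms(2) by (simp add: measure_distr)
  also have "\<dots> = measure lborel S"
    by (simp flip: lborel_vec_reindex[OF bij_imp_bij_inv[OF assms(1)]])
  finally show ?thesis .
qed

lemma det_reindex:
  fixes A :: "'a::comm_ring_1^'n^'n" and p :: "'m::finite \<Rightarrow> 'n"
  assumes "bij p"
  shows "det (\<chi> i j. A $ p i $ p j) = det A"
proof -
  let ?F = "map_permutation UNIV p" and ?G = "map_permutation UNIV (inv p)"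
  have inj: "inj p" using assms bij_is_inj by blast
  have F_apply: "?F \<sigma> (p i) = p (\<sigma> i)" for \<sigma> i
    using map_permutation_apply[OF inj] by simp
  have F_permutes: "?F \<sigma> permutes UNIV" if "\<sigma> permutes UNIV" for \<sigma> :: "'m \<Rightarrow> 'm"
    using map_permutation_permutes[OF assms that] by simp
  have G_permutes: "?G \<tau> permutes UNIV" if "\<tau> permutes UNIV" for \<tau> :: "'n \<Rightarrow> 'n"
    using map_permutation_permutes[OF bij_imp_bij_inv[OF assms] that] by simp
  have GF: "?G (?F \<sigma>) = \<sigma>" if "\<sigma> permutes UNIV" for \<sigma> :: "'m \<Rightarrow> 'm"
    by (rule map_permutation_compose_inv) (use assms that inj in auto)
  have FG: "?F (?G \<tau>) = \<tau>" if "\<tau> permutes UNIV" for \<tau> :: "'n \<Rightarrow> 'n"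
    by (rule map_permutation_compose_inv)
       (use bij_imp_bij_inv[OF assms] that surj_f_inv_f[OF bij_is_surj[OF assms]] in auto)
  have term_eq: "of_int (sign \<sigma>) * (\<Prod>i\<in>UNIV. A $ p i $ p (\<sigma> i))
      = of_int (sign (?F \<sigma>)) * (\<Prod>j\<in>UNIV. A $ j $ ?F \<sigma> j)"
    if "\<sigma> permutes UNIV" for \<sigma> :: "'m \<Rightarrow> 'm"
  proof -
    have "(\<Prod>j\<in>UNIV. A $ j $ ?F \<sigma> j) = (\<Prod>i\<in>UNIV. A $ p i $ ?F \<sigma> (p i))"
      using prod.reindex_bij_betw[OF assms, of "\<lambda>j. A $ j $ ?F \<sigma> j"] by simp
    then show ?thesis
      using sign_map_permutation[OF inj that] by (simp add: F_apply)
  qed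
  show ?thesis
    unfolding det_def
    by (rule sum.reindex_bij_witness[of _ ?G ?F])
       (simp_all add: GF FG F_permutes G_permutes term_eq)
qed

lemma measure_lebesgue_simplex:
  fixes X :: "(real^'n) set" and f :: "'n \<Rightarrow> real^'n"
  assumes "finite X" "card X = Suc CARD('n)" "x0 \<in> X" "bij_betw f UNIV (X - {x0})"
  shows "measure lebesgue (convex hull X) = \<bar>det (\<chi> i j. f j $ i - x0 $ i)\<bar> / fact CARD('n)"
proof -
  let ?p = "Rep_wellordered :: 'n wellordered \<Rightarrow> 'n"
  let ?R = "vec_reindex ?p :: real^'n \<Rightarrow> real^'n wellordered"
  have inj_R: "inj ?R"
    by (rule inj_vec_reindex[OF bij_is_surj[OF bij_Rep_wellordered]])
  have bij: "bij_betw (?R \<circ> f \<circ> ?p) UNIV (?R ` X - {?R x0})"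
  proof -
    have "bij_betw ?R (X - {x0}) (?R ` (X - {x0}))"
      by (rule inj_on_imp_bij_betw[OF inj_on_subset[OF inj_R subset_UNIV]])
    then have "bij_betw ?R (X - {x0}) (?R ` X - {?R x0})"
      by (simp add: image_set_diff[OF inj_R])
    then show ?thesis
      by (intro bij_betw_trans[OF bij_Rep_wellordered] bij_betw_trans[OF assms(4)])
  qed
  have card: "card (?R ` X) = Suc CARD('n wellordered)"
    using assms(2) card_image[OF inj_on_subset[OF inj_R subset_UNIV]] by (simp add: card_wellordered)
  have "measure lborel (convex hull (?R ` X))
      = \<bar>det (\<chi> i j. (?R \<circ> f \<circ> ?p) j $ i - ?R x0 $ i)\<bar> / fact CARD('n wellordered)"
    by (rule content_simplex[OF finite_imageI[OF assms(1)] card imageI[OF assms(3)] bij])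
  also have "(\<chi> i j. (?R \<circ> f \<circ> ?p) j $ i - ?R x0 $ i)
      = (\<chi> i j. (\<chi> i j. f j $ i - x0 $ i) $ ?p i $ ?p j)"
    by (simp add: vec_eq_iff)
  also have "det \<dots> = det (\<chi> i j. f j $ i - x0 $ i)"
    by (rule det_reindex[OF bij_Rep_wellordered])
  also have "convex hull (?R ` X) = ?R ` (convex hull X)"
    by (simp add: convex_hull_linear_image linear_vec_reindex)
  also have "measure lborel \<dots> = measure lborel (convex hull X)"
    by (intro measure_vec_reindex_image bij_Rep_wellordered borel_compact
        finite_imp_compact_convex_hull assms(1))
  also have "measure lborel (convex hull X) = measure lebesgue (convex hull X)"
    using borel_compact[OF finite_imp_compact_convex_hull[OF assms(1)]]
    by (simp add: measure_completion)
  finally show ?thesis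
    by (simp add: card_wellordered)
qed

lemma det_in_Ints:
  fixes A :: "'a::comm_ring_1^'n^'n"
  assumes "\<And>i j. A $ i $ j \<in> \<int>"
  shows "det A \<in> \<int>"
  unfolding det_def using assms by (intro Ints_sum Ints_mult Ints_prod) auto

lemma integer_vec_unimodular_preimage:
  fixes A :: "real^'n^'n"
  assumes "\<And>i j. A $ i $ j \<in> \<int>" "\<bar>det A\<bar> = 1" "integer_vec (A *v y)"
  shows "integer_vec y"
  unfolding integer_vec_def
proof
  fix k
  have "det (\<chi> i j. if j = k then (A *v y) $ i else A $ i $ j) \<in> \<int>"
    using assms(1,3) by (intro det_in_Ints) (simp add: integer_vec_def)
  then have "y $ k * det A \<in> \<int>"
    by (simp add: cramer_lemma)
  moreover have "det A = 1 \<or> det A = -1"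
    using assms(2) by linarith
  ultimately show "y $ k \<in> \<int>"
    by (auto simp: minus_in_Ints_iff)
qed

lemma simplex_coefficients_in_Ints:
  fixes V :: "(real^'n) set"
  assumes "finite V" "card V = Suc CARD('n)" "0 \<in> V" "\<forall>v\<in>V. integer_vec v"
    and "measure lebesgue (convex hull V) = 1 / fact CARD('n)"
    and "integer_vec w" "w = (\<Sum>v\<in>V - {0}. c v *\<^sub>R v)" "v \<in> V - {0}"
  shows "c v \<in> \<int>"
proof -
  obtain f where f: "bij_betw f (UNIV :: 'n set) (V - {0})"
    using finite_same_card_bij[of "UNIV :: 'n set" "V - {0}"] assms(1-3) by auto
  define A where "A = (\<chi> i j. f j $ i)"
  define y where "y = (\<chi> j. c (f j))"
  have "measure lebesgue (convex hull V) = \<bar>det A\<bar> / fact CARD('n)"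
    using measure_lebesgue_simplex[OF assms(1-3) f] by (simp add: A_def)
  then have unimodular: "\<bar>det A\<bar> = 1"
    using assms(5) by simp
  have entries: "A $ i $ j \<in> \<int>" for i j
    using assms(4) bij_betwE[OF f] by (auto simp: A_def integer_vec_def)
  have "A *v y = w"
  proof -
    have "(A *v y) $ i = w $ i" for i
      using sum.reindex_bij_betw[OF f, of "\<lambda>v. c v * v $ i"]
      by (simp add: assms(7) matrix_vector_mult_def A_def y_def mult.commute)
    then show ?thesis by (simp add: vec_eq_iff)
  qed
  then have "integer_vec y"
    using integer_vec_unimodular_preimage[OF entries unimodular] assms(6) by simp
  moreover obtain k where "v = f k"
    using f assms(8) by (metis bij_betw_iff_bijections)
  ultimately show ?thesis
    by (simp add: integer_vec_def y_def)
qed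

lemma pos_cone_convex_hull_nonneg_combination:
  assumes "finite V" "0 \<in> V" "x \<in> pos_cone (convex hull V)"
  obtains c where "\<And>v. v \<in> V - {0} \<Longrightarrow> c v \<ge> 0" "x = (\<Sum>v\<in>V - {0}. c v *\<^sub>R v)"
proof -
  obtain r y where "r \<ge> 0" "y \<in> convex hull V" "x = r *\<^sub>R y"
    using assms(3) unfolding pos_cone_def by blast
  moreover obtain u where "\<forall>v\<in>V. 0 \<le> u v" "(\<Sum>v\<in>V. u v *\<^sub>R v) = y"
    using \<open>y \<in> convex hull V\<close> convex_hull_finite[OF assms(1)] by blast
  ultimately have "\<forall>v\<in>V - {0}. r * u v \<ge> 0" "x = (\<Sum>v\<in>V. (r * u v) *\<^sub>R v)"
    by (auto simp: scaleR_sum_right)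
  moreover have "(\<Sum>v\<in>V. (r * u v) *\<^sub>R v) = (\<Sum>v\<in>V - {0}. (r * u v) *\<^sub>R v)"
    using sum.remove[OF assms(1,2), of "\<lambda>v. (r * u v) *\<^sub>R v"] by simp
  ultimately show thesis
    by (intro that[of "\<lambda>v. r * u v"]) auto
qed

lemma pos_cone_cover:
  fixes x :: "real^'n"
  assumes "0 \<in> interior (\<Union>\<S>)"
  shows "\<exists>S\<in>\<S>. x \<in> pos_cone S"
proof -
  obtain e where "e > 0" "ball 0 e \<subseteq> \<Union>\<S>"
    using assms mem_interior by blast
  define r where "r = e / (norm x + 1)"
  have "norm x + 1 > 0"
    by (simp add: add_nonneg_pos)
  then have "r > 0"
    using \<open>e > 0\<close> by (simp add: r_def)
  have "norm (r *\<^sub>R x) < r * (norm x + 1)"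
    using \<open>r > 0\<close> by simp
  also have "\<dots> = e"
    using \<open>norm x + 1 > 0\<close> by (simp add: r_def)
  finally have "r *\<^sub>R x \<in> ball 0 e"
    by simp
  then obtain S where "S \<in> \<S>" "r *\<^sub>R x \<in> S"
    using \<open>ball 0 e \<subseteq> \<Union>\<S>\<close> by blast
  then show ?thesis
    using \<open>r > 0\<close> unfolding pos_cone_def
    by (intro bexI[of _ S] CollectI exI[of _ "1 / r"] exI[of _ "r *\<^sub>R x"]) auto
qed

lemma lattice_simplex_cone_nat_combination:
  fixes V :: "(real^'n) set"
  assumes "finite V" "card V = Suc CARD('n)" "0 \<in> V" "\<forall>v\<in>V. integer_vec v"
    and "measure lebesgue (convex hull V) = 1 / fact CARD('n)"
    and "integer_vec z" "- z \<in> pos_cone (convex hull V)"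
  shows "\<exists>\<beta> :: real^'n \<Rightarrow> nat. z + (\<Sum>v\<in>V - {0}. real (\<beta> v) *\<^sub>R v) = 0"
proof -
  obtain c where c_nonneg: "\<And>v. v \<in> V - {0} \<Longrightarrow> c v \<ge> 0"
    and c_sum: "- z = (\<Sum>v\<in>V - {0}. c v *\<^sub>R v)"
    using pos_cone_convex_hull_nonneg_combination[OF assms(1,3,7)] by blast
  have "integer_vec (- z)"
    using assms(6) by (simp add: integer_vec_def minus_in_Ints_iff)
  then have c_Ints: "c v \<in> \<int>" if "v \<in> V - {0}" for v
    by (rule simplex_coefficients_in_Ints[OF assms(1-5) _ c_sum that])
  have "real (nat \<lfloor>c v\<rfloor>) = c v" if "v \<in> V - {0}" for v
    using c_Ints[OF that] c_nonneg[OF that] by (auto elim!: Ints_cases)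
  then have "(\<Sum>v\<in>V - {0}. real (nat \<lfloor>c v\<rfloor>) *\<^sub>R v) = - z"
    by (simp add: c_sum)
  then show ?thesis
    by (intro exI[of _ "\<lambda>v. nat \<lfloor>c v\<rfloor>"]) simp
qed

theorem lemma1p5:
  fixes M :: "real^'n^'n" and \<T> :: "(real^'n) set set" and z :: "real^'n"
  assumes "sym_pos_def M"
    and "M_reduced_mesh M \<T>"
    and "integer_vec z"
  shows "(\<exists>V\<in>\<T>. - z \<in> pos_cone (convex hull V)) \<and>
         (\<forall>V\<in>\<T>. - z \<in> pos_cone (convex hull V) \<longrightarrow>
            (\<exists>\<beta> :: real^'n \<Rightarrow> nat. z + (\<Sum>v\<in>V - {0}. real (\<beta> v) *\<^sub>R v) = 0))"
proof -
  from assms(2) have cover: "0 \<in> interior (\<Union>V\<in>\<T>. convex hull V)"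
    and simplex: "\<And>V. V \<in> \<T> \<Longrightarrow> finite V \<and> card V = Suc CARD('n) \<and> 0 \<in> V"
    and lattice: "\<And>V. V \<in> \<T> \<Longrightarrow> (\<forall>v\<in>V. integer_vec v) \<and>
                     measure lebesgue (convex hull V) = 1 / fact CARD('n)"
    unfolding M_reduced_mesh_def conforming_mesh_def is_simplex_verts_def by auto
  show ?thesis
    using pos_cone_cover[OF cover] simplex lattice
      lattice_simplex_cone_nat_combination[OF _ _ _ _ _ assms(3)] by blast
qed

end
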